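(* Let $\pi$ be a probability measure on $\mathcal{B}_n=\{0,1\}^n$ and let $L$ be the generator of a $\pi$-reversible flip-swap random walk on $\mathcal{B}_n$ which is $R$-stable for some $R\ge0$. Then for any nonempty $A\subset\mathcal{B}_n$, \[ \pi(A)\,\pi\Big(\exp\Big(\frac{1}{40R+4}\,d_T^2(\cdot,A)\Big)\Big)\le1, \] where $d_T(x,A)=\sup\{d_\alpha(x,A):\alpha\in[0,\infty)^n,|\alpha|\le1\}$.
   Context: A generator on $\mathcal{B}_n$ is a real matrix $L=(L(x,y))$ with $L(x,y)\ge0$ for $x\ne y$ and zero row sums; it is $\pi$-reversible if $\pi(x)L(x,y)=\pi(y)L(y,x)$. With $(Lg)(x)=\sum_yL(x,y)g(y)$, $\mathcal{E}(f,g)=-\sum_x\pi(x)f(x)(Lg)(x)$ and $\mathrm{Ent}_\pi(f)=\pi(f\log f)-\pi(f)\log\pi(f)$, $\rho(L)$ is the largest constant with $\rho(L)\mathrm{Ent}_\pi(f)\le\mathcal{E}(f,\log f)$ for all non-constant $f\colon\mathcal{B}_n\to[0,\infty)$. Flip-swap: $L(x,y)>0$, $x\ne y$, implies $y$ differs from $x$ by flipping one coordinate or swapping two unequal coordinates. $R$-stable: $\rho(L)>0$ and $\max_{x\in\mathrm{supp}\,\pi,\,i\in[n]}\sum_{y:y_i\ne x_i}L(x,y)\le R\rho(L)$. $d_\alpha(x,y)=\sum_i\alpha_i\mathbf{1}\{x_i\ne y_i\}$, $d_\alpha(x,A)=\min_{y\in A}d_\alpha(x,y)$, $|\alpha|$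 Euclidean norm, $\pi(g)=\int g\,d\pi$. *)

theory Defs
  imports Complex_Main
begin

text \<open>The hypercube B_n is modelled as the type of functions from a finite
  index type 'n (with CARD('n) = n) to bool.\<close>

definition generator :: "(('n::finite \<Rightarrow> bool) \<Rightarrow> ('n \<Rightarrow> bool) \<Rightarrow> real) \<Rightarrow> bool" where
  "generator L \<longleftrightarrow> (\<forall>x y. x \<noteq> y \<longrightarrow> L x y \<ge> 0) \<and> (\<forall>x. (\<Sum>y\<in>UNIV. L x y) = 0)"

definition reversible :: "(('n::finite \<Rightarrow> bool) \<Rightarrow> real) \<Rightarrow> (('n \<Rightarrow> bool) \<Rightarrow> ('n \<Rightarrow> bool) \<Rightarrow> real) \<Rightarrow> bool" where
  "reversible \<pi> L \<longleftrightarrow> (\<forall>x y. \<pi> x * L x y = \<pi> y * L y x)"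

definition flip_swap :: "(('n::finite \<Rightarrow> bool) \<Rightarrow> ('n \<Rightarrow> bool) \<Rightarrow> real) \<Rightarrow> bool" where
  "flip_swap L \<longleftrightarrow> (\<forall>x y. x \<noteq> y \<and> L x y > 0 \<longrightarrow>
      (\<exists>i. y = x(i := \<not> x i)) \<or> (\<exists>i j. x i \<noteq> x j \<and> y = x(i := x j, j := x i)))"

definition expect :: "(('n::finite \<Rightarrow> bool) \<Rightarrow> real) \<Rightarrow> (('n \<Rightarrow> bool) \<Rightarrow> real) \<Rightarrow> real" where
  "expect \<pi> g = (\<Sum>x\<in>UNIV. \<pi> x * g x)"

definition apply_gen :: "(('n::finite \<Rightarrow> bool) \<Rightarrow> ('n \<Rightarrow> bool) \<Rightarrow> real) \<Rightarrow> (('n \<Rightarrow> bool) \<Rightarrow> real) \<Rightarrow> ('n \<Rightarrow> bool) \<Rightarrow> real" where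
  "apply_gen L g x = (\<Sum>y\<in>UNIV. L x y * g y)"

definition dirichlet :: "(('n::finite \<Rightarrow> bool) \<Rightarrow> real) \<Rightarrow> (('n \<Rightarrow> bool) \<Rightarrow> ('n \<Rightarrow> bool) \<Rightarrow> real)
    \<Rightarrow> (('n \<Rightarrow> bool) \<Rightarrow> real) \<Rightarrow> (('n \<Rightarrow> bool) \<Rightarrow> real) \<Rightarrow> real" where
  "dirichlet \<pi> L f g = - (\<Sum>x\<in>UNIV. \<pi> x * f x * apply_gen L g x)"

definition Ent :: "(('n::finite \<Rightarrow> bool) \<Rightarrow> real) \<Rightarrow> (('n \<Rightarrow> bool) \<Rightarrow> real) \<Rightarrow> real" where
  "Ent \<pi> f = expect \<pi> (\<lambda>x. f x * ln (f x)) - expect \<pi> f * ln (expect \<pi> f)"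

definition mlsi :: "(('n::finite \<Rightarrow> bool) \<Rightarrow> real) \<Rightarrow> (('n \<Rightarrow> bool) \<Rightarrow> ('n \<Rightarrow> bool) \<Rightarrow> real) \<Rightarrow> real \<Rightarrow> bool" where
  "mlsi \<pi> L c \<longleftrightarrow> (\<forall>f. (\<forall>x. f x > 0) \<and> \<not> (\<exists>a. \<forall>x. f x = a)
      \<longrightarrow> c * Ent \<pi> f \<le> dirichlet \<pi> L f (\<lambda>x. ln (f x)))"

definition rho :: "(('n::finite \<Rightarrow> bool) \<Rightarrow> real) \<Rightarrow> (('n \<Rightarrow> bool) \<Rightarrow> ('n \<Rightarrow> bool) \<Rightarrow> real) \<Rightarrow> real" where
  "rho \<pi> L = Sup {c. mlsi \<pi> L c}"

definition R_stable :: "real \<Rightarrow> (('n::finite \<Rightarrow> bool) \<Rightarrow> real) \<Rightarrow> (('n \<Rightarrow> bool) \<Rightarrow> ('n \<Rightarrow> bool) \<Rightarrow> real) \<Rightarrow> bool" where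
  "R_stable R \<pi> L \<longleftrightarrow> rho \<pi> L > 0 \<and>
     (\<forall>x i. \<pi> x > 0 \<longrightarrow> (\<Sum>y\<in>{y. y i \<noteq> x i}. L x y) \<le> R * rho \<pi> L)"

definition d_alpha :: "('n::finite \<Rightarrow> real) \<Rightarrow> ('n \<Rightarrow> bool) \<Rightarrow> ('n \<Rightarrow> bool) \<Rightarrow> real" where
  "d_alpha \<alpha> x y = (\<Sum>i\<in>UNIV. \<alpha> i * (if x i \<noteq> y i then 1 else 0))"

definition d_alpha_set :: "('n::finite \<Rightarrow> real) \<Rightarrow> ('n \<Rightarrow> bool) \<Rightarrow> ('n \<Rightarrow> bool) set \<Rightarrow> real" where
  "d_alpha_set \<alpha> x A = Min ((\<lambda>y. d_alpha \<alpha> x y) ` A)"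

definition d_T :: "('n::finite \<Rightarrow> bool) \<Rightarrow> ('n \<Rightarrow> bool) set \<Rightarrow> real" where
  "d_T x A = Sup {d_alpha_set \<alpha> x A | \<alpha>. (\<forall>i. \<alpha> i \<ge> 0) \<and> sqrt (\<Sum>i\<in>UNIV. (\<alpha> i)\<^sup>2) \<le> 1}"

end

theory Submission
  imports Defs "HOL-Analysis.Analysis"
begin

text \<open>
  Entropy method for f = d_T(., A)^2. The modified log-Sobolev inequality bounds
  Ent(exp(t f)) by the Dirichlet form E(exp(t f), t f), which only sees jumps along which f
  decreases. For a nearly optimal weight vector alpha of d_T(x, A), the decrease of d_T along a
  jump x -> y is at most the alpha-mass of the (at most two) coordinates the jump changes, and by
  R-stability every coordinate changes at rate at most R rho; this gives
  sum_y L(x,y) (f x - f y)_+^2 <= 8 R rho f x. Hence Ent(exp(t f)) <= 8 c R t^2 pi(f exp(t f)),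
  with c = 1 for t > 0 and, as a jump lowers f by at most 2, with c = 2 for -1/2 <= t < 0.
  Herbst's argument turns the two bounds into estimates of ln pi(exp(t f)) against pi(f) of
  opposite signs, which combine to pi(exp(-f/2)) pi(exp(f/(40R+4))) <= 1; finally
  pi(A) <= pi(exp(-f/2)) because f vanishes on A.
\<close>

section \<open>Talagrand's convex distance\<close>

definition unit_weights :: "('n::finite \<Rightarrow> real) set" where
  "unit_weights = {\<alpha>. (\<forall>i. 0 \<le> \<alpha> i) \<and> L2_set \<alpha> UNIV \<le> 1}"

lemma d_T_eq_SUP: "d_T x A = (SUP \<alpha>\<in>unit_weights. d_alpha_set \<alpha> x A)"
  unfolding d_T_def unit_weights_def L2_set_def by (rule arg_cong[where f = Sup]) auto

lemma zero_in_unit_weights: "(\<lambda>_. 0) \<in> unit_weights"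
  by (simp add: unit_weights_def L2_set_def)

lemma unit_weights_le_1: "\<alpha> \<in> unit_weights \<Longrightarrow> \<alpha> i \<le> 1"
  unfolding unit_weights_def using member_le_L2_set[of UNIV i \<alpha>] by auto

lemma unit_weights_sum_squares_le_1: "\<alpha> \<in> unit_weights \<Longrightarrow> (\<Sum>i\<in>UNIV. (\<alpha> i)\<^sup>2) \<le> 1"
  by (simp add: unit_weights_def L2_set_def real_sqrt_le_1_iff)

lemma d_alpha_eq_sum: "d_alpha \<alpha> x y = sum \<alpha> {i. x i \<noteq> y i}"
proof -
  have "sum \<alpha> {i. x i \<noteq> y i} = (\<Sum>i\<in>UNIV. if i \<in> {i. x i \<noteq> y i} then \<alpha> i else 0)"
    using sum.inter_restrict[of UNIV \<alpha> "{i. x i \<noteq> y i}"] by simp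
  also have "\<dots> = d_alpha \<alpha> x y"
    unfolding d_alpha_def by (intro sum.cong) auto
  finally show ?thesis ..
qed

lemma d_alpha_set_le: "z \<in> A \<Longrightarrow> d_alpha_set \<alpha> x A \<le> d_alpha \<alpha> x z"
  unfolding d_alpha_set_def by (rule Min_le) auto

lemma d_alpha_set_attained:
  assumes "A \<noteq> {}"
  obtains z where "z \<in> A" "d_alpha_set \<alpha> x A = d_alpha \<alpha> x z"
proof -
  have "d_alpha_set \<alpha> x A \<in> d_alpha \<alpha> x ` A"
    unfolding d_alpha_set_def using assms by (intro Min_in) auto
  then show thesis using that by blast
qed

lemma d_alpha_set_nonneg:
  assumes "\<forall>i. 0 \<le> \<alpha> i" "A \<noteq> {}"
  shows "0 \<le> d_alpha_set \<alpha> x A"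
proof -
  obtain z where "d_alpha_set \<alpha> x A = d_alpha \<alpha> x z"
    using d_alpha_set_attained[OF assms(2)] by blast
  then show ?thesis using assms(1) by (simp add: d_alpha_eq_sum sum_nonneg)
qed

lemma bdd_above_d_alpha_set:
  assumes "A \<noteq> {}"
  shows "bdd_above ((\<lambda>\<alpha>. d_alpha_set \<alpha> x A) ` (unit_weights :: ('n::finite \<Rightarrow> real) set))"
proof (rule bdd_aboveI2)
  obtain z where z: "z \<in> A" using assms by blast
  fix \<alpha> :: "'n \<Rightarrow> real" assume "\<alpha> \<in> unit_weights"
  then have "d_alpha \<alpha> x z \<le> (\<Sum>i\<in>(UNIV :: 'n set). 1)"
    unfolding d_alpha_def by (intro sum_mono) (auto simp: unit_weights_def intro: unit_weights_le_1)
  then show "d_alpha_set \<alpha> x A \<le> real CARD('n)"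
    using d_alpha_set_le[OF z, of \<alpha> x] by simp
qed

lemma d_alpha_set_le_d_T:
  "A \<noteq> {} \<Longrightarrow> \<alpha> \<in> unit_weights \<Longrightarrow> d_alpha_set \<alpha> x A \<le> d_T x A"
  unfolding d_T_eq_SUP by (rule cSUP_upper[OF _ bdd_above_d_alpha_set])

lemma d_T_le: "(\<And>\<alpha>. \<alpha> \<in> unit_weights \<Longrightarrow> d_alpha_set \<alpha> x A \<le> c) \<Longrightarrow> d_T x A \<le> c"
  unfolding d_T_eq_SUP using zero_in_unit_weights by (intro cSUP_least) auto

lemma d_T_nonneg:
  assumes "A \<noteq> {}"
  shows "0 \<le> d_T x A"
proof -
  have "0 \<le> d_alpha_set (\<lambda>_. 0) x A" by (rule d_alpha_set_nonneg) (use assms in auto)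
  also have "\<dots> \<le> d_T x A" by (rule d_alpha_set_le_d_T[OF assms zero_in_unit_weights])
  finally show ?thesis .
qed

lemma d_T_eq_0:
  assumes "x \<in> A"
  shows "d_T x A = 0"
proof -
  have "d_alpha_set \<alpha> x A \<le> 0" for \<alpha>
    using d_alpha_set_le[OF assms, of \<alpha> x] by (simp add: d_alpha_eq_sum)
  then have "d_T x A \<le> 0" by (rule d_T_le)
  with d_T_nonneg[of A x] assms show ?thesis by auto
qed

lemma d_T_approx:
  assumes "A \<noteq> {}" "0 < e"
  obtains \<alpha> where "\<alpha> \<in> unit_weights" "d_T x A - e < d_alpha_set \<alpha> x A"
proof -
  have "d_T x A - e < (SUP \<alpha>\<in>unit_weights. d_alpha_set \<alpha> x A)"
    using assms(2) unfolding d_T_eq_SUP by simp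
  then show thesis
    using that by (subst (asm) less_cSUP_iff[OF _ bdd_above_d_alpha_set[OF assms(1)]])
      (use zero_in_unit_weights in auto)
qed

lemma d_alpha_set_split:
  assumes "\<forall>i. 0 \<le> \<alpha> i" "A \<noteq> {}"
  shows "d_alpha_set \<alpha> x A
    \<le> sum \<alpha> {i. x i \<noteq> y i} + d_alpha_set (\<lambda>i. if x i \<noteq> y i then 0 else \<alpha> i) y A"
proof -
  define \<gamma> where "\<gamma> = (\<lambda>i. if x i \<noteq> y i then 0 else \<alpha> i)"
  obtain z where z: "z \<in> A" "d_alpha_set \<gamma> y A = d_alpha \<gamma> y z"
    using d_alpha_set_attained[OF assms(2)] by blast
  have "d_alpha_set \<alpha> x A \<le> d_alpha \<alpha> x z"
    by (rule d_alpha_set_le[OF z(1)])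
  also have "\<dots> \<le> (\<Sum>i\<in>UNIV. \<alpha> i * (if x i \<noteq> y i then 1 else 0) + \<gamma> i * (if y i \<noteq> z i then 1 else 0))"
    unfolding d_alpha_def by (intro sum_mono) (use assms(1) in \<open>auto simp: \<gamma>_def\<close>)
  also have "\<dots> = d_alpha \<alpha> x y + d_alpha \<gamma> y z"
    by (simp only: d_alpha_def sum.distrib)
  finally show ?thesis using z(2) by (simp add: d_alpha_eq_sum \<gamma>_def)
qed

lemma d_alpha_set_le_L2_set_mult_d_T:
  assumes "\<forall>i. 0 \<le> \<gamma> i" "A \<noteq> {}"
  shows "d_alpha_set \<gamma> x A \<le> L2_set \<gamma> UNIV * d_T x A"
proof (cases "L2_set \<gamma> UNIV = 0")
  case True
  then have "\<gamma> = (\<lambda>_. 0)" by (auto simp: L2_set_eq_0_iff)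
  moreover obtain z where "z \<in> A" using assms(2) by blast
  ultimately show ?thesis
    using True d_alpha_set_le[of z A \<gamma> x] by (simp add: d_alpha_eq_sum)
next
  case False
  define n where "n = L2_set \<gamma> UNIV"
  have n: "0 < n" using False by (simp add: n_def order_less_le)
  define \<beta> where "\<beta> = (\<lambda>i. \<gamma> i / n)"
  have "L2_set \<beta> UNIV = L2_set \<gamma> UNIV / n"
    using L2_set_right_distrib[of "1 / n" \<gamma> UNIV] n by (simp add: \<beta>_def)
  then have \<beta>: "\<beta> \<in> unit_weights"
    using assms(1) n by (simp add: unit_weights_def \<beta>_def n_def)
  obtain z where z: "z \<in> A" "d_alpha_set \<beta> x A = d_alpha \<beta> x z"
    using d_alpha_set_attained[OF assms(2)] by blast
  have "d_alpha_set \<gamma> x A \<le> d_alpha \<gamma> x z" by (rule d_alpha_set_le[OF z(1)])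
  also have "\<dots> = n * d_alpha \<beta> x z"
    using n by (simp add: d_alpha_eq_sum \<beta>_def sum_distrib_left)
  also have "\<dots> \<le> n * d_T x A"
    using d_alpha_set_le_d_T[OF assms(2) \<beta>, of x] z(2) n by (intro mult_left_mono) auto
  finally show ?thesis by (simp add: n_def)
qed

lemma d_T_diff_le:
  assumes "A \<noteq> {}" "\<alpha> \<in> unit_weights" "d_T x A - e < d_alpha_set \<alpha> x A"
  shows "d_T x A - d_T y A \<le> sum \<alpha> {i. x i \<noteq> y i} + e"
proof -
  define \<gamma> where "\<gamma> = (\<lambda>i. if x i \<noteq> y i then 0 else \<alpha> i)"
  have \<alpha>: "\<forall>i. 0 \<le> \<alpha> i" "L2_set \<alpha> UNIV \<le> 1" using assms(2) by (auto simp: unit_weights_def)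
  have "d_alpha_set \<gamma> y A \<le> L2_set \<gamma> UNIV * d_T y A"
    by (rule d_alpha_set_le_L2_set_mult_d_T) (use \<alpha> assms(1) in \<open>auto simp: \<gamma>_def\<close>)
  also have "\<dots> \<le> 1 * d_T y A"
  proof (rule mult_right_mono)
    have "L2_set \<gamma> UNIV \<le> L2_set \<alpha> UNIV" by (rule L2_set_mono) (use \<alpha> in \<open>auto simp: \<gamma>_def\<close>)
    then show "L2_set \<gamma> UNIV \<le> 1" using \<alpha>(2) by linarith
  qed (rule d_T_nonneg[OF assms(1)])
  finally show ?thesis
    using d_alpha_set_split[OF \<alpha>(1) assms(1), of x y] assms(3) by (simp add: \<gamma>_def)
qed

lemma mult_add_mult_le_sqrt_sum_squares:
  fixes a b c d :: real
  shows "a * c + b * d \<le> sqrt (a\<^sup>2 + b\<^sup>2) * sqrt (c\<^sup>2 + d\<^sup>2)"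
proof -
  have "(a * c + b * d)\<^sup>2 \<le> (a\<^sup>2 + b\<^sup>2) * (c\<^sup>2 + d\<^sup>2)"
    using zero_le_power2[of "a * d - b * c"] by (simp add: power2_eq_square algebra_simps)
  then show ?thesis by (simp add: real_le_rsqrt real_sqrt_mult[symmetric])
qed

text \<open>Split \<open>\<alpha>\<close> into its restriction to the coordinates where \<open>x\<close> and \<open>y\<close> differ, whose
  mass is at most \<open>sqrt (card S)\<close> times its norm, and the rest, which sees \<open>y\<close> as it sees \<open>x\<close> and
  is therefore controlled by \<open>d_T y A\<close>; Cauchy-Schwarz in the plane combines the two.\<close>

lemma d_T_sq_le:
  assumes "A \<noteq> {}"
  shows "(d_T x A)\<^sup>2 \<le> (d_T y A)\<^sup>2 + card {i. x i \<noteq> y i}"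
proof -
  define S where "S = {i. x i \<noteq> y i}"
  have "d_alpha_set \<alpha> x A \<le> sqrt (card S + (d_T y A)\<^sup>2)" if "\<alpha> \<in> unit_weights" for \<alpha>
  proof -
    have \<alpha>: "\<forall>i. 0 \<le> \<alpha> i" "L2_set \<alpha> UNIV \<le> 1" using that by (auto simp: unit_weights_def)
    define \<gamma> where "\<gamma> = (\<lambda>i. if x i \<noteq> y i then 0 else \<alpha> i)"
    have "(\<Sum>i\<in>UNIV. (\<alpha> i)\<^sup>2) = (\<Sum>i\<in>UNIV. (if i \<in> S then (\<alpha> i)\<^sup>2 else 0) + (\<gamma> i)\<^sup>2)"
      by (intro sum.cong) (auto simp: \<gamma>_def S_def)
    also have "\<dots> = (\<Sum>i\<in>S. (\<alpha> i)\<^sup>2) + (\<Sum>i\<in>UNIV. (\<gamma> i)\<^sup>2)"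
      by (simp add: sum.distrib sum.inter_restrict[symmetric])
    finally have "(L2_set \<alpha> S)\<^sup>2 + (L2_set \<gamma> UNIV)\<^sup>2 = (L2_set \<alpha> UNIV)\<^sup>2"
      by (simp add: L2_set_def sum_nonneg)
    also have "\<dots> \<le> 1" using \<alpha>(2) by (simp add: power_le_one)
    finally have norm: "(L2_set \<alpha> S)\<^sup>2 + (L2_set \<gamma> UNIV)\<^sup>2 \<le> 1" .
    have "sum \<alpha> S \<le> sqrt (card S) * L2_set \<alpha> S"
      using L2_set_mult_ineq[of "\<lambda>_. 1" \<alpha> S] \<alpha>(1) by (simp add: L2_set_constant)
    moreover have "d_alpha_set \<gamma> y A \<le> L2_set \<gamma> UNIV * d_T y A"
      by (rule d_alpha_set_le_L2_set_mult_d_T) (use \<alpha> assms in \<open>auto simp: \<gamma>_def\<close>)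
    ultimately have "d_alpha_set \<alpha> x A \<le> sqrt (card S) * L2_set \<alpha> S + d_T y A * L2_set \<gamma> UNIV"
      using d_alpha_set_split[OF \<alpha>(1) assms, of x y] by (simp add: S_def \<gamma>_def mult.commute)
    also have "\<dots> \<le> sqrt ((sqrt (card S))\<^sup>2 + (d_T y A)\<^sup>2)
        * sqrt ((L2_set \<alpha> S)\<^sup>2 + (L2_set \<gamma> UNIV)\<^sup>2)"
      by (rule mult_add_mult_le_sqrt_sum_squares)
    also have "\<dots> \<le> sqrt (card S + (d_T y A)\<^sup>2)"
      using norm by (simp add: mult_left_le)
    finally show ?thesis .
  qed
  then have "d_T x A \<le> sqrt (card S + (d_T y A)\<^sup>2)" by (rule d_T_le)
  then have "(d_T x A)\<^sup>2 \<le> (sqrt (card S + (d_T y A)\<^sup>2))\<^sup>2"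
    using d_T_nonneg[OF assms] by (intro power_mono) auto
  then show ?thesis by (simp add: S_def)
qed

section \<open>Downward jumps of the convex distance\<close>

lemma flip_swap_card_diff_le_2:
  assumes "flip_swap L" "0 < L x y"
  shows "card {i. x i \<noteq> y i} \<le> 2"
proof (cases "x = y")
  case False
  with assms consider i where "y = x(i := \<not> x i)" | i j where "y = x(i := x j, j := x i)"
    unfolding flip_swap_def by blast
  then show ?thesis
  proof cases
    case (1 i)
    then have "{k. x k \<noteq> y k} = {i}" by auto
    then show ?thesis by simp
  next
    case (2 i j)
    then have "{k. x k \<noteq> y k} \<subseteq> {i, j}" by auto
    then have "card {k. x k \<noteq> y k} \<le> card {i, j}" by (intro card_mono) auto
    also have "\<dots> \<le> 2" by (simp add: card_insert_if)
    finally show ?thesis .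
  qed
qed simp

lemma d_T_sq_diff_le_2:
  assumes "A \<noteq> {}" "flip_swap L" "0 < L x y"
  shows "(d_T x A)\<^sup>2 - (d_T y A)\<^sup>2 \<le> 2"
proof -
  have "(d_T x A)\<^sup>2 \<le> (d_T y A)\<^sup>2 + real (card {i. x i \<noteq> y i})"
    by (rule d_T_sq_le[OF assms(1)])
  also have "\<dots> \<le> (d_T y A)\<^sup>2 + 2"
    using flip_swap_card_diff_le_2[of L x y] assms(2,3) by simp
  finally show ?thesis by simp
qed

lemma sum_rate_mult_changed_weight_le:
  fixes L :: "('n::finite \<Rightarrow> bool) \<Rightarrow> ('n \<Rightarrow> bool) \<Rightarrow> real"
  assumes "\<And>i. 0 \<le> w i" "\<And>i. (\<Sum>y\<in>{y. y i \<noteq> x i}. L x y) \<le> r"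
  shows "(\<Sum>y\<in>UNIV. L x y * (\<Sum>i\<in>{i. x i \<noteq> y i}. w i)) \<le> r * sum w UNIV"
proof -
  have "(\<Sum>y\<in>UNIV. L x y * (\<Sum>i\<in>{i. x i \<noteq> y i}. w i))
      = (\<Sum>y\<in>UNIV. \<Sum>i\<in>UNIV. w i * (if y i \<noteq> x i then L x y else 0))"
    unfolding sum_distrib_left by (intro sum.cong refl sum.mono_neutral_cong_left) auto
  also have "\<dots> = (\<Sum>i\<in>UNIV. w i * (\<Sum>y\<in>{y. y i \<noteq> x i}. L x y))"
    unfolding sum_distrib_left
    by (subst sum.swap) (intro sum.cong refl sum.mono_neutral_cong_right; auto)
  also have "\<dots> \<le> (\<Sum>i\<in>UNIV. w i * r)"
    by (intro sum_mono mult_left_mono assms)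
  finally show ?thesis by (simp add: sum_distrib_left mult.commute)
qed

lemma d_T_diff_pos_sq_le:
  assumes "A \<noteq> {}" "\<alpha> \<in> unit_weights" "d_T x A - e < d_alpha_set \<alpha> x A" "0 < e"
    and "card {i. x i \<noteq> y i} \<le> m"
  shows "(max 0 (d_T x A - d_T y A))\<^sup>2
    \<le> real m * (\<Sum>i\<in>{i. x i \<noteq> y i}. (\<alpha> i)\<^sup>2) + e * (2 * real m + e)"
proof -
  define S where "S = {i. x i \<noteq> y i}"
  define s where "s = sum \<alpha> S"
  have \<alpha>: "\<forall>i. 0 \<le> \<alpha> i" "\<forall>i. \<alpha> i \<le> 1"
    using assms(2) unit_weights_le_1 by (auto simp: unit_weights_def)
  have s0: "0 \<le> s" by (simp add: s_def sum_nonneg \<alpha>)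
  have "s \<le> real (card S) * 1" unfolding s_def by (rule sum_bounded_above) (use \<alpha> in auto)
  with assms(5) have sm: "s \<le> real m" by (simp add: S_def)
  have "(max 0 (d_T x A - d_T y A))\<^sup>2 \<le> (s + e)\<^sup>2"
    using d_T_diff_le[OF assms(1-3), of y] s0 assms(4)
    by (intro power_mono) (auto simp: s_def S_def)
  also have "\<dots> = s\<^sup>2 + e * (2 * s + e)" by (simp add: power2_eq_square algebra_simps)
  also have "\<dots> \<le> real m * (\<Sum>i\<in>S. (\<alpha> i)\<^sup>2) + e * (2 * real m + e)"
  proof (rule add_mono)
    have "s\<^sup>2 \<le> (\<Sum>i\<in>S. (\<alpha> i)\<^sup>2) * card S"
      unfolding s_def by (rule sum_squared_le_sum_of_squares)
    also have "\<dots> \<le> (\<Sum>i\<in>S. (\<alpha> i)\<^sup>2) * m"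
      using assms(5) by (intro mult_left_mono) (auto simp: S_def sum_nonneg)
    finally show "s\<^sup>2 \<le> real m * (\<Sum>i\<in>S. (\<alpha> i)\<^sup>2)" by (simp add: mult.commute)
    show "e * (2 * s + e) \<le> e * (2 * real m + e)"
      using sm assms(4) by (intro mult_left_mono) auto
  qed
  finally show ?thesis by (simp add: S_def)
qed

text \<open>The supremum defining \<open>d_T x A\<close> need not be attained; an \<open>e\<close>-optimal weight vector
  for \<open>x\<close> is used for all targets \<open>y\<close> at once.\<close>

lemma d_T_gradient_le_approx:
  fixes L :: "('n::finite \<Rightarrow> bool) \<Rightarrow> ('n \<Rightarrow> bool) \<Rightarrow> real"
  assumes A: "A \<noteq> {}" and "0 < e"
    and nonneg: "\<And>y. y \<noteq> x \<Longrightarrow> 0 \<le> L x y"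
    and local: "\<And>y. 0 < L x y \<Longrightarrow> card {i. x i \<noteq> y i} \<le> m"
    and rate: "\<And>i. (\<Sum>y\<in>{y. y i \<noteq> x i}. L x y) \<le> r"
  shows "(\<Sum>y\<in>UNIV. L x y * (max 0 (d_T x A - d_T y A))\<^sup>2)
    \<le> real m * r + e * (2 * real m + e) * (\<Sum>y\<in>UNIV. if y = x then 0 else L x y)"
proof -
  have "0 \<le> (\<Sum>y\<in>{y. y i \<noteq> x i}. L x y)" for i by (intro sum_nonneg nonneg) auto
  with rate have r: "0 \<le> r" by (meson order_trans)
  obtain \<alpha> where \<alpha>: "\<alpha> \<in> unit_weights" "d_T x A - e < d_alpha_set \<alpha> x A"
    using d_T_approx[OF A \<open>0 < e\<close>] by blast
  have "L x y * (max 0 (d_T x A - d_T y A))\<^sup>2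
      \<le> real m * (L x y * (\<Sum>i\<in>{i. x i \<noteq> y i}. (\<alpha> i)\<^sup>2))
        + e * (2 * real m + e) * (if y = x then 0 else L x y)" for y
  proof (cases "0 < L x y \<and> y \<noteq> x")
    case True
    then show ?thesis
      using mult_left_mono[OF d_T_diff_pos_sq_le[OF A \<alpha> \<open>0 < e\<close> local], of y "L x y"]
      by (simp add: algebra_simps)
  next
    case False
    then have "y = x \<or> L x y = 0" using nonneg[of y] by (cases "y = x") auto
    then show ?thesis by auto
  qed
  then have "(\<Sum>y\<in>UNIV. L x y * (max 0 (d_T x A - d_T y A))\<^sup>2)
      \<le> (\<Sum>y\<in>UNIV. real m * (L x y * (\<Sum>i\<in>{i. x i \<noteq> y i}. (\<alpha> i)\<^sup>2))
        + e * (2 * real m + e) * (if y = x then 0 else L x y))"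
    by (rule sum_mono)
  also have "\<dots> = real m * (\<Sum>y\<in>UNIV. L x y * (\<Sum>i\<in>{i. x i \<noteq> y i}. (\<alpha> i)\<^sup>2))
        + e * (2 * real m + e) * (\<Sum>y\<in>UNIV. if y = x then 0 else L x y)"
    by (simp add: sum.distrib sum_distrib_left)
  also have "(\<Sum>y\<in>UNIV. L x y * (\<Sum>i\<in>{i. x i \<noteq> y i}. (\<alpha> i)\<^sup>2)) \<le> r * (\<Sum>i\<in>UNIV. (\<alpha> i)\<^sup>2)"
    by (rule sum_rate_mult_changed_weight_le) (simp, rule rate)
  also have "\<dots> \<le> r" using unit_weights_sum_squares_le_1[OF \<alpha>(1)] r by (simp add: mult_left_le)
  finally show ?thesis by (simp add: mult_left_mono)
qed

lemma d_T_gradient_le: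
  fixes L :: "('n::finite \<Rightarrow> bool) \<Rightarrow> ('n \<Rightarrow> bool) \<Rightarrow> real"
  assumes A: "A \<noteq> {}"
    and nonneg: "\<And>y. y \<noteq> x \<Longrightarrow> 0 \<le> L x y"
    and local: "\<And>y. 0 < L x y \<Longrightarrow> card {i. x i \<noteq> y i} \<le> m"
    and rate: "\<And>i. (\<Sum>y\<in>{y. y i \<noteq> x i}. L x y) \<le> r"
  shows "(\<Sum>y\<in>UNIV. L x y * (max 0 (d_T x A - d_T y A))\<^sup>2) \<le> real m * r"
proof -
  define M where "M = (\<Sum>y\<in>UNIV. if y = x then 0 else L x y)"
  have "((\<lambda>e. real m * r + e * (2 * real m + e) * M)
      \<longlongrightarrow> real m * r + 0 * (2 * real m + 0) * M) (at_right 0)"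
    by (intro tendsto_intros)
  moreover have "eventually (\<lambda>e. (\<Sum>y\<in>UNIV. L x y * (max 0 (d_T x A - d_T y A))\<^sup>2)
      \<le> real m * r + e * (2 * real m + e) * M) (at_right 0)"
    using eventually_at_right_less[of 0] unfolding M_def
    by eventually_elim
      (rule d_T_gradient_le_approx[where L = L and x = x and m = m and r = r,
          OF A _ nonneg local rate])
  ultimately show ?thesis by (intro tendsto_lowerbound) auto
qed

lemma max_0_diff_squares_sq_le:
  fixes a b :: real
  assumes "0 \<le> a" "0 \<le> b"
  shows "(max 0 (a\<^sup>2 - b\<^sup>2))\<^sup>2 \<le> 4 * a\<^sup>2 * (max 0 (a - b))\<^sup>2"
proof (cases "b < a")
  case True
  then have "b\<^sup>2 < a\<^sup>2" using assms by (intro power_strict_mono) auto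
  then have "(max 0 (a\<^sup>2 - b\<^sup>2))\<^sup>2 = (a - b)\<^sup>2 * (a + b)\<^sup>2"
    by (simp add: power2_eq_square algebra_simps)
  also have "\<dots> \<le> (a - b)\<^sup>2 * (2 * a)\<^sup>2"
    using assms True by (intro mult_left_mono power_mono) auto
  finally show ?thesis using True by (simp add: power_mult_distrib ac_simps)
next
  case False
  then have "a\<^sup>2 \<le> b\<^sup>2" using assms by (intro power_mono) auto
  then show ?thesis by simp
qed

lemma d_T_sq_gradient_le:
  fixes L :: "('n::finite \<Rightarrow> bool) \<Rightarrow> ('n \<Rightarrow> bool) \<Rightarrow> real"
  assumes A: "A \<noteq> {}"
    and nonneg: "\<And>y. y \<noteq> x \<Longrightarrow> 0 \<le> L x y"
    and local: "\<And>y. 0 < L x y \<Longrightarrow> card {i. x i \<noteq> y i} \<le> m"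
    and rate: "\<And>i. (\<Sum>y\<in>{y. y i \<noteq> x i}. L x y) \<le> r"
  shows "(\<Sum>y\<in>UNIV. L x y * (max 0 ((d_T x A)\<^sup>2 - (d_T y A)\<^sup>2))\<^sup>2) \<le> 4 * real m * r * (d_T x A)\<^sup>2"
proof -
  have "(\<Sum>y\<in>UNIV. L x y * (max 0 ((d_T x A)\<^sup>2 - (d_T y A)\<^sup>2))\<^sup>2)
      \<le> (\<Sum>y\<in>UNIV. 4 * (d_T x A)\<^sup>2 * (L x y * (max 0 (d_T x A - d_T y A))\<^sup>2))"
  proof (rule sum_mono)
    fix y
    show "L x y * (max 0 ((d_T x A)\<^sup>2 - (d_T y A)\<^sup>2))\<^sup>2
        \<le> 4 * (d_T x A)\<^sup>2 * (L x y * (max 0 (d_T x A - d_T y A))\<^sup>2)"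
    proof (cases "y = x")
      case False
      then show ?thesis
        using mult_left_mono[OF max_0_diff_squares_sq_le[OF d_T_nonneg[OF A] d_T_nonneg[OF A]]
            nonneg[OF False]]
        by (simp add: mult_ac)
    qed simp
  qed
  also have "\<dots> = 4 * (d_T x A)\<^sup>2 * (\<Sum>y\<in>UNIV. L x y * (max 0 (d_T x A - d_T y A))\<^sup>2)"
    by (simp add: sum_distrib_left)
  also have "\<dots> \<le> 4 * (d_T x A)\<^sup>2 * (real m * r)"
    by (intro mult_left_mono d_T_gradient_le[of A x L m r, OF A nonneg local rate]) auto
  finally show ?thesis by (simp add: mult_ac)
qed

section \<open>Dirichlet form and entropy\<close>

lemma expect_const: "(\<Sum>x\<in>UNIV. \<pi> x) = 1 \<Longrightarrow> expect \<pi> (\<lambda>_. a) = a"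
  by (simp add: expect_def flip: sum_distrib_right)

lemma expect_pos:
  fixes \<pi> :: "('n::finite \<Rightarrow> bool) \<Rightarrow> real"
  assumes "\<forall>x. 0 \<le> \<pi> x" "(\<Sum>x\<in>UNIV. \<pi> x) = 1" "\<And>x. 0 < g x"
  shows "0 < expect \<pi> g"
proof -
  obtain x where x: "0 < \<pi> x"
    using assms(1,2) by (metis less_eq_real_def sum.neutral zero_neq_one)
  have "\<pi> x * g x \<le> expect \<pi> g"
    unfolding expect_def by (rule member_le_sum) (simp_all add: assms(1) less_imp_le[OF assms(3)])
  moreover have "0 < \<pi> x * g x" using x assms(3) by simp
  ultimately show ?thesis by linarith
qed

lemma apply_gen_eq_sum_diff:
  assumes "generator L"
  shows "apply_gen L g x = (\<Sum>y\<in>UNIV. L x y * (g y - g x))"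
proof -
  have "(\<Sum>y\<in>UNIV. L x y) = 0" using assms by (simp add: generator_def)
  then show ?thesis
    by (simp add: apply_gen_def algebra_simps sum_subtractf sum_distrib_left[symmetric])
qed

lemma dirichlet_symmetrized:
  fixes \<pi> :: "('n::finite \<Rightarrow> bool) \<Rightarrow> real"
  assumes "generator L" "reversible \<pi> L"
  shows "2 * dirichlet \<pi> L F G = (\<Sum>x\<in>UNIV. \<Sum>y\<in>UNIV. \<pi> x * L x y * ((F x - F y) * (G x - G y)))"
proof -
  have rev: "\<pi> x * L x y = \<pi> y * L y x" for x y using assms(2) by (simp add: reversible_def)
  have "dirichlet \<pi> L F G = (\<Sum>x\<in>UNIV. \<Sum>y\<in>UNIV. \<pi> x * L x y * (F x * (G x - G y)))"
    unfolding dirichlet_def apply_gen_eq_sum_diff[OF assms(1)]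
    by (simp add: sum_distrib_left algebra_simps sum_negf[symmetric])
  moreover have "\<dots> = (\<Sum>x\<in>UNIV. \<Sum>y\<in>UNIV. \<pi> x * L x y * (F y * (G y - G x)))"
    by (subst sum.swap) (simp only: rev)
  ultimately have "2 * dirichlet \<pi> L F G = (\<Sum>x\<in>UNIV. \<Sum>y\<in>UNIV.
      \<pi> x * L x y * (F x * (G x - G y)) + \<pi> x * L x y * (F y * (G y - G x)))"
    by (simp add: sum.distrib)
  then show ?thesis by (simp add: algebra_simps)
qed

text \<open>By reversibility the two orientations of a pair contribute equally to the symmetrised
  form, so it suffices to keep the one along which \<open>f\<close> decreases.\<close>

lemma dirichlet_comp_eq_sum_descents:
  fixes \<pi> f :: "('n::finite \<Rightarrow> bool) \<Rightarrow> real" and \<phi> \<psi> :: "real \<Rightarrow> real"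
  assumes "generator L" "reversible \<pi> L"
  shows "dirichlet \<pi> L (\<lambda>x. \<phi> (f x)) (\<lambda>x. \<psi> (f x)) = (\<Sum>x\<in>UNIV. \<pi> x * (\<Sum>y\<in>UNIV.
      L x y * (if f y < f x then (\<phi> (f x) - \<phi> (f y)) * (\<psi> (f x) - \<psi> (f y)) else 0)))"
proof -
  define D where "D x y = (if f y < f x then (\<phi> (f x) - \<phi> (f y)) * (\<psi> (f x) - \<psi> (f y)) else 0)"
    for x y
  have rev: "\<pi> x * L x y = \<pi> y * L y x" for x y using assms(2) by (simp add: reversible_def)
  have "(\<phi> (f x) - \<phi> (f y)) * (\<psi> (f x) - \<psi> (f y)) = D x y + D y x" for x y
    by (cases "f x" "f y" rule: linorder_cases) (auto simp: D_def algebra_simps)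
  then have "2 * dirichlet \<pi> L (\<lambda>x. \<phi> (f x)) (\<lambda>x. \<psi> (f x))
      = (\<Sum>x\<in>UNIV. \<Sum>y\<in>UNIV. \<pi> x * L x y * D x y) + (\<Sum>x\<in>UNIV. \<Sum>y\<in>UNIV. \<pi> x * L x y * D y x)"
    by (simp add: dirichlet_symmetrized[OF assms] algebra_simps sum.distrib)
  also have "(\<Sum>x\<in>UNIV. \<Sum>y\<in>UNIV. \<pi> x * L x y * D y x) = (\<Sum>x\<in>UNIV. \<Sum>y\<in>UNIV. \<pi> x * L x y * D x y)"
    by (subst sum.swap) (simp only: rev)
  finally have "dirichlet \<pi> L (\<lambda>x. \<phi> (f x)) (\<lambda>x. \<psi> (f x))
      = (\<Sum>x\<in>UNIV. \<Sum>y\<in>UNIV. \<pi> x * L x y * D x y)"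
    by simp
  then show ?thesis by (simp add: D_def sum_distrib_left mult.assoc)
qed

lemma dirichlet_ln_nonneg:
  fixes \<pi> :: "('n::finite \<Rightarrow> bool) \<Rightarrow> real"
  assumes "\<forall>x. 0 \<le> \<pi> x" "generator L" "reversible \<pi> L" "\<forall>x. 0 < f x"
  shows "0 \<le> dirichlet \<pi> L f (\<lambda>x. ln (f x))"
proof -
  have "0 \<le> L x y * (if f y < f x then (f x - f y) * (ln (f x) - ln (f y)) else 0)" for x y
  proof (cases "f y < f x")
    case True
    then have "y \<noteq> x" by auto
    then have "0 \<le> L x y" using assms(2) by (simp add: generator_def)
    moreover have "ln (f y) \<le> ln (f x)" using True assms(4) by simp
    ultimately show ?thesis using True by simp
  qed simp
  then show ?thesis
    unfolding dirichlet_comp_eq_sum_descents[OF assms(2,3), of "\<lambda>u. u" f ln]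
    by (intro sum_nonneg mult_nonneg_nonneg[OF _ sum_nonneg]) (simp_all add: assms(1))
qed

text \<open>The hypothesis \<open>0 \<le> rho \<pi> L\<close> is needed: if no test function has positive entropy,
  the set of admissible constants is unbounded and its \<open>Sup\<close> is unspecified.\<close>

lemma rho_mult_Ent_le:
  fixes \<pi> :: "('n::finite \<Rightarrow> bool) \<Rightarrow> real"
  assumes "\<forall>x. 0 \<le> \<pi> x" "(\<Sum>x\<in>UNIV. \<pi> x) = 1" "generator L" "reversible \<pi> L"
    and "0 \<le> rho \<pi> L" "\<forall>x. 0 < f x"
  shows "rho \<pi> L * Ent \<pi> f \<le> dirichlet \<pi> L f (\<lambda>x. ln (f x))"
proof -
  define D where "D = dirichlet \<pi> L f (\<lambda>x. ln (f x))"
  have D: "0 \<le> D" unfolding D_def by (rule dirichlet_ln_nonneg[OF assms(1,3,4,6)])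
  show ?thesis
  proof (cases "0 < Ent \<pi> f")
    case True
    have "\<not> (\<exists>a. \<forall>x. f x = a)"
    proof
      assume "\<exists>a. \<forall>x. f x = a"
      then obtain a where "f = (\<lambda>_. a)" by blast
      with True show False by (simp add: Ent_def expect_const[OF assms(2)])
    qed
    then have mlsi_le: "c \<le> D / Ent \<pi> f" if "mlsi \<pi> L c" for c
      using that True assms(6) by (simp add: mlsi_def D_def pos_le_divide_eq)
    have "mlsi \<pi> L 0"
      using dirichlet_ln_nonneg[OF assms(1,3,4)] by (simp add: mlsi_def)
    then have "rho \<pi> L \<le> D / Ent \<pi> f"
      unfolding rho_def by (intro cSup_least mlsi_le) auto
    then show ?thesis using True by (simp add: D_def pos_le_divide_eq mult.commute)
  next
    case False
    then have "rho \<pi> L * Ent \<pi> f \<le> 0" using assms(5) by (simp add: mult_nonneg_nonpos)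
    then show ?thesis using D by (simp add: D_def)
  qed
qed

lemma dirichlet_exp_le:
  fixes \<pi> f :: "('n::finite \<Rightarrow> bool) \<Rightarrow> real"
  assumes "\<forall>x. 0 \<le> \<pi> x" "generator L" "reversible \<pi> L" "0 \<le> c"
    and step: "\<And>x y. 0 < \<pi> x \<Longrightarrow> 0 < L x y \<Longrightarrow> f y < f x \<Longrightarrow>
      (exp (t * f x) - exp (t * f y)) * (t * f x - t * f y)
        \<le> c * exp (t * f x) * (t * f x - t * f y)\<^sup>2"
  shows "dirichlet \<pi> L (\<lambda>x. exp (t * f x)) (\<lambda>x. t * f x)
    \<le> (\<Sum>x\<in>UNIV. \<pi> x * (c * t\<^sup>2 * exp (t * f x) * (\<Sum>y\<in>UNIV. L x y * (max 0 (f x - f y))\<^sup>2)))"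
  unfolding dirichlet_comp_eq_sum_descents[OF assms(2,3), of "\<lambda>u. exp (t * u)" f "\<lambda>u. t * u"]
proof (intro sum_mono)
  fix x
  have descent_le: "L x y
        * (if f y < f x then (exp (t * f x) - exp (t * f y)) * (t * f x - t * f y) else 0)
      \<le> c * t\<^sup>2 * exp (t * f x) * (L x y * (max 0 (f x - f y))\<^sup>2)" if "0 < \<pi> x" for y
  proof (cases "f y < f x \<and> 0 < L x y")
    case True
    then have "L x y * ((exp (t * f x) - exp (t * f y)) * (t * f x - t * f y))
        \<le> L x y * (c * exp (t * f x) * (t * f x - t * f y)\<^sup>2)"
      using step[OF that] by (intro mult_left_mono) auto
    then show ?thesis using True by (simp add: power2_eq_square algebra_simps)
  next
    case False
    moreover have "f y < f x \<Longrightarrow> 0 \<le> L x y"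
      using assms(2) unfolding generator_def by (metis less_irrefl)
    ultimately show ?thesis using assms(4) by auto
  qed
  show "\<pi> x * (\<Sum>y\<in>UNIV. L x y * (if f y < f x
        then (exp (t * f x) - exp (t * f y)) * (t * f x - t * f y) else 0))
      \<le> \<pi> x * (c * t\<^sup>2 * exp (t * f x) * (\<Sum>y\<in>UNIV. L x y * (max 0 (f x - f y))\<^sup>2))"
  proof (cases "0 < \<pi> x")
    case True
    then show ?thesis
      using descent_le by (intro mult_left_mono) (auto simp: sum_distrib_left intro: sum_mono)
  next
    case False
    then have "\<pi> x = 0" using assms(1) by (meson order.antisym not_less)
    then show ?thesis by simp
  qed
qed

lemma Ent_exp_eq:
  "Ent \<pi> (\<lambda>x. exp (t * f x)) = t * expect \<pi> (\<lambda>x. f x * exp (t * f x))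
    - expect \<pi> (\<lambda>x. exp (t * f x)) * ln (expect \<pi> (\<lambda>x. exp (t * f x)))"
  unfolding Ent_def expect_def by (simp add: sum_distrib_left mult_ac)

lemma Ent_exp_le:
  fixes \<pi> f :: "('n::finite \<Rightarrow> bool) \<Rightarrow> real"
  assumes "\<forall>x. 0 \<le> \<pi> x" "(\<Sum>x\<in>UNIV. \<pi> x) = 1" "generator L" "reversible \<pi> L" "0 < rho \<pi> L"
    and grad: "\<And>x. 0 < \<pi> x \<Longrightarrow> (\<Sum>y\<in>UNIV. L x y * (max 0 (f x - f y))\<^sup>2) \<le> \<kappa> * rho \<pi> L * f x"
    and step: "\<And>x y. 0 < \<pi> x \<Longrightarrow> 0 < L x y \<Longrightarrow> f y < f x \<Longrightarrow>
      (exp (t * f x) - exp (t * f y)) * (t * f x - t * f y)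
        \<le> c * exp (t * f x) * (t * f x - t * f y)\<^sup>2"
    and "0 \<le> c"
  shows "Ent \<pi> (\<lambda>x. exp (t * f x)) \<le> c * \<kappa> * t\<^sup>2 * expect \<pi> (\<lambda>x. f x * exp (t * f x))"
proof -
  define \<rho> where "\<rho> = rho \<pi> L"
  have "\<rho> * Ent \<pi> (\<lambda>x. exp (t * f x)) \<le> dirichlet \<pi> L (\<lambda>x. exp (t * f x)) (\<lambda>x. ln (exp (t * f x)))"
    unfolding \<rho>_def by (rule rho_mult_Ent_le) (use assms in auto)
  also have "\<dots> \<le> (\<Sum>x\<in>UNIV.
      \<pi> x * (c * t\<^sup>2 * exp (t * f x) * (\<Sum>y\<in>UNIV. L x y * (max 0 (f x - f y))\<^sup>2)))"
    using dirichlet_exp_le[OF assms(1,3,4,8) step] by simp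
  also have "\<dots> \<le> (\<Sum>x\<in>UNIV. \<pi> x * (c * t\<^sup>2 * exp (t * f x) * (\<kappa> * \<rho> * f x)))"
  proof (rule sum_mono)
    fix x
    show "\<pi> x * (c * t\<^sup>2 * exp (t * f x) * (\<Sum>y\<in>UNIV. L x y * (max 0 (f x - f y))\<^sup>2))
        \<le> \<pi> x * (c * t\<^sup>2 * exp (t * f x) * (\<kappa> * \<rho> * f x))"
    proof (cases "0 < \<pi> x")
      case True
      then show ?thesis
        using grad[OF True] assms(8) unfolding \<rho>_def by (intro mult_left_mono) auto
    next
      case False
      then have "\<pi> x = 0" using assms(1) by (meson order.antisym not_less)
      then show ?thesis by simp
    qed
  qed
  also have "\<dots> = \<rho> * (c * \<kappa> * t\<^sup>2 * expect \<pi> (\<lambda>x. f x * exp (t * f x)))"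
    by (simp add: expect_def sum_distrib_left mult_ac)
  finally show ?thesis using assms(5) by (simp add: \<rho>_def)
qed

section \<open>Herbst's argument\<close>

lemma has_real_derivative_expect_exp:
  "((\<lambda>t. expect \<pi> (\<lambda>x. exp (t * f x)))
    has_real_derivative expect \<pi> (\<lambda>x. f x * exp (t * f x))) (at t)"
  unfolding expect_def by (auto intro!: derivative_eq_intros simp: mult_ac)

lemma herbst_has_nonpos_deriv:
  fixes H dH :: "real \<Rightarrow> real"
  assumes pos: "\<And>t. 0 < H t" and deriv: "\<And>t. (H has_real_derivative dH t) (at t)"
    and "t \<noteq> 0" and ent: "t * dH t - H t * ln (H t) \<le> c * t\<^sup>2 * dH t"
  shows "\<exists>D. ((\<lambda>t. ln (H t) / t - c * ln (H t)) has_real_derivative D) (at t) \<and> D \<le> 0"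
proof (intro exI conjI)
  have ln: "((\<lambda>t. ln (H t)) has_real_derivative dH t / H t) (at t)"
    using DERIV_chain'[OF deriv DERIV_ln_divide[OF pos]] by (simp add: field_simps)
  show "((\<lambda>t. ln (H t) / t - c * ln (H t)) has_real_derivative
      (t * dH t - H t * ln (H t)) / (H t * t\<^sup>2) - c * (dH t / H t)) (at t)"
    using DERIV_diff[OF DERIV_divide[OF ln DERIV_ident \<open>t \<noteq> 0\<close>] DERIV_cmult[OF ln, of c]]
    using pos[of t] \<open>t \<noteq> 0\<close> by (simp add: field_simps power2_eq_square)
  have "(t * dH t - H t * ln (H t)) / (H t * t\<^sup>2) \<le> c * t\<^sup>2 * dH t / (H t * t\<^sup>2)"
    using ent pos[of t] \<open>t \<noteq> 0\<close> by (intro divide_right_mono) auto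
  also have "\<dots> = c * (dH t / H t)" using pos[of t] \<open>t \<noteq> 0\<close> by simp
  finally show "(t * dH t - H t * ln (H t)) / (H t * t\<^sup>2) - c * (dH t / H t) \<le> 0" by simp
qed

lemma herbst_tendsto:
  fixes H dH :: "real \<Rightarrow> real"
  assumes pos: "\<And>t. 0 < H t" and deriv: "\<And>t. (H has_real_derivative dH t) (at t)" and "H 0 = 1"
  shows "((\<lambda>t. ln (H t) / t - c * ln (H t)) \<longlongrightarrow> dH 0) (at 0)"
proof -
  have "((\<lambda>t. ln (H t)) has_real_derivative dH 0 / H 0) (at 0)"
    using DERIV_chain'[OF deriv DERIV_ln_divide[OF pos]] by (simp add: field_simps)
  then have ln: "((\<lambda>t. ln (H t)) has_real_derivative dH 0) (at 0)"
    using \<open>H 0 = 1\<close> by simp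
  then have "((\<lambda>t. ln (H t) / t) \<longlongrightarrow> dH 0) (at 0)"
    using \<open>H 0 = 1\<close> by (simp add: has_field_derivative_iff)
  moreover have "((\<lambda>t. c * ln (H t)) \<longlongrightarrow> c * 0) (at 0)"
    using DERIV_isCont[OF ln] \<open>H 0 = 1\<close> by (intro tendsto_intros) (simp add: isCont_def)
  ultimately have "((\<lambda>t. ln (H t) / t - c * ln (H t)) \<longlongrightarrow> dH 0 - c * 0) (at 0)"
    by (rule tendsto_diff)
  then show ?thesis by simp
qed

lemma herbst_right:
  fixes H dH :: "real \<Rightarrow> real"
  assumes pos: "\<And>t. 0 < H t" and deriv: "\<And>t. (H has_real_derivative dH t) (at t)" and "H 0 = 1"
    and "0 < \<theta>" and ent: "\<And>t. 0 < t \<Longrightarrow> t \<le> \<theta> \<Longrightarrow> t * dH t - H t * ln (H t) \<le> c * t\<^sup>2 * dH t"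
  shows "ln (H \<theta>) / \<theta> - c * ln (H \<theta>) \<le> dH 0"
proof -
  define \<Phi> where "\<Phi> = (\<lambda>t. ln (H t) / t - c * ln (H t))"
  have mono: "\<Phi> \<theta> \<le> \<Phi> e" if e: "0 < e" "e \<le> \<theta>" for e
  proof (rule DERIV_nonpos_imp_nonincreasing[OF e(2)])
    fix t assume "e \<le> t" "t \<le> \<theta>"
    then show "\<exists>D. (\<Phi> has_real_derivative D) (at t) \<and> D \<le> 0"
      unfolding \<Phi>_def using e by (intro herbst_has_nonpos_deriv[OF pos deriv] ent) auto
  qed
  have "eventually (\<lambda>e. \<Phi> \<theta> \<le> \<Phi> e) (at_right 0)"
    using eventually_at_right_real[OF \<open>0 < \<theta>\<close>] by eventually_elim (auto intro: mono)
  moreover have "(\<Phi> \<longlongrightarrow> dH 0) (at_right 0)"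
    unfolding \<Phi>_def by (rule tendsto_mono[OF at_le herbst_tendsto[OF pos deriv \<open>H 0 = 1\<close>]]) simp
  ultimately have "\<Phi> \<theta> \<le> dH 0" by (intro tendsto_lowerbound) auto
  then show ?thesis by (simp add: \<Phi>_def)
qed

lemma herbst_left:
  fixes H dH :: "real \<Rightarrow> real"
  assumes pos: "\<And>t. 0 < H t" and deriv: "\<And>t. (H has_real_derivative dH t) (at t)" and "H 0 = 1"
    and "s < 0" and ent: "\<And>t. s \<le> t \<Longrightarrow> t < 0 \<Longrightarrow> t * dH t - H t * ln (H t) \<le> c * t\<^sup>2 * dH t"
  shows "dH 0 \<le> ln (H s) / s - c * ln (H s)"
proof -
  define \<Phi> where "\<Phi> = (\<lambda>t. ln (H t) / t - c * ln (H t))"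
  have mono: "\<Phi> e \<le> \<Phi> s" if e: "s \<le> e" "e < 0" for e
  proof (rule DERIV_nonpos_imp_nonincreasing[OF e(1)])
    fix t assume "s \<le> t" "t \<le> e"
    then show "\<exists>D. (\<Phi> has_real_derivative D) (at t) \<and> D \<le> 0"
      unfolding \<Phi>_def using e by (intro herbst_has_nonpos_deriv[OF pos deriv] ent) auto
  qed
  have "eventually (\<lambda>e. \<Phi> e \<le> \<Phi> s) (at_left 0)"
    using eventually_at_left_real[OF \<open>s < 0\<close>] by eventually_elim (auto intro: mono)
  moreover have "(\<Phi> \<longlongrightarrow> dH 0) (at_left 0)"
    unfolding \<Phi>_def by (rule tendsto_mono[OF at_le herbst_tendsto[OF pos deriv \<open>H 0 = 1\<close>]]) simp
  ultimately have "dH 0 \<le> \<Phi> s" by (intro tendsto_upperbound) auto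
  then show ?thesis by (simp add: \<Phi>_def)
qed

lemma herbst_product_le_one:
  fixes H dH :: "real \<Rightarrow> real"
  assumes pos: "\<And>t. 0 < H t" and deriv: "\<And>t. (H has_real_derivative dH t) (at t)" and "H 0 = 1"
    and "0 \<le> dH 0" and "s < 0" "0 < \<theta>"
    and right: "\<And>t. 0 < t \<Longrightarrow> t \<le> \<theta> \<Longrightarrow> t * dH t - H t * ln (H t) \<le> a * t\<^sup>2 * dH t"
    and left: "\<And>t. s \<le> t \<Longrightarrow> t < 0 \<Longrightarrow> t * dH t - H t * ln (H t) \<le> b * t\<^sup>2 * dH t"
    and "0 < b - 1 / s" "b - 1 / s \<le> 1 / \<theta> - a"
  shows "H s * H \<theta> \<le> 1"
proof -
  define p q where "p = ln (H \<theta>)" and "q = ln (H s)"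
  have "(1 / \<theta> - a) * p \<le> dH 0"
    using herbst_right[OF pos deriv \<open>H 0 = 1\<close> \<open>0 < \<theta>\<close> right] by (simp add: p_def algebra_simps)
  then have "p \<le> dH 0 / (1 / \<theta> - a)"
    using assms(9,10) by (simp add: pos_le_divide_eq mult.commute)
  also have "\<dots> \<le> dH 0 / (b - 1 / s)"
    using assms(4,9,10) by (intro divide_left_mono) auto
  finally have p: "p \<le> dH 0 / (b - 1 / s)" .
  have "dH 0 \<le> (1 / s - b) * q"
    using herbst_left[OF pos deriv \<open>H 0 = 1\<close> \<open>s < 0\<close> left] by (simp add: q_def algebra_simps)
  moreover have "(1 / s - b) * q = - (q * (b - 1 / s))" by (simp add: algebra_simps)
  ultimately have "q * (b - 1 / s) \<le> - dH 0" by linarith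
  then have "q \<le> - dH 0 / (b - 1 / s)"
    using assms(9) by (simp only: pos_le_divide_eq)
  with p have "q + p \<le> 0" by linarith
  have "H s * H \<theta> = exp (q + p)" using pos by (simp add: p_def q_def exp_add)
  also have "\<dots> \<le> 1" using \<open>q + p \<le> 0\<close> by simp
  finally show ?thesis .
qed

section \<open>Flip-swap walks\<close>

lemma exp_diff_mult_diff_le:
  fixes a b :: real
  assumes "b \<le> a"
  shows "(exp a - exp b) * (a - b) \<le> exp a * (a - b)\<^sup>2"
proof -
  have "exp a * (1 + (b - a)) \<le> exp a * exp (b - a)"
    by (intro mult_left_mono exp_ge_add_one_self) auto
  also have "\<dots> = exp b" by (simp flip: exp_add)
  finally have "exp a - exp b \<le> exp a * (a - b)" by (simp add: algebra_simps)
  then have "(exp a - exp b) * (a - b) \<le> exp a * (a - b) * (a - b)"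
    using assms by (intro mult_right_mono) auto
  then show ?thesis by (simp add: power2_eq_square mult.assoc)
qed

lemma exp_diff_mult_diff_le_2:
  fixes a b :: real
  assumes "a \<le> b" "b \<le> a + 1"
  shows "(exp a - exp b) * (a - b) \<le> 2 * exp a * (a - b)\<^sup>2"
proof -
  define d where "d = b - a"
  have d: "0 \<le> d" "d \<le> 1" using assms by (auto simp: d_def)
  have "exp b = exp a * exp d" by (simp add: d_def flip: exp_add)
  also have "\<dots> \<le> exp a * (1 + d + d\<^sup>2)" by (intro mult_left_mono exp_bound d) auto
  also have "\<dots> \<le> exp a * (1 + 2 * d)"
    using d by (intro mult_left_mono) (auto simp: power2_eq_square mult_left_le)
  finally have "exp b - exp a \<le> 2 * exp a * d" by (simp add: algebra_simps)
  then have "(exp b - exp a) * d \<le> 2 * exp a * d * d"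
    using d by (intro mult_right_mono) auto
  then show ?thesis by (simp add: d_def power2_eq_square algebra_simps)
qed

locale flip_swap_walk =
  fixes \<pi> :: "('n::finite \<Rightarrow> bool) \<Rightarrow> real"
    and L :: "('n \<Rightarrow> bool) \<Rightarrow> ('n \<Rightarrow> bool) \<Rightarrow> real"
    and R :: real
  assumes prob_nonneg: "\<forall>x. 0 \<le> \<pi> x" and prob_sum: "(\<Sum>x\<in>UNIV. \<pi> x) = 1"
    and generator: "generator L" and reversible: "reversible \<pi> L" and flip_swap: "flip_swap L"
    and R_nonneg: "0 \<le> R" and R_stable: "R_stable R \<pi> L"
begin

lemma rho_pos: "0 < rho \<pi> L"
  using R_stable by (simp add: R_stable_def)

lemma d_T_sq_gradient_le_rho:
  assumes "A \<noteq> {}" "0 < \<pi> x"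
  shows "(\<Sum>y\<in>UNIV. L x y * (max 0 ((d_T x A)\<^sup>2 - (d_T y A)\<^sup>2))\<^sup>2)
    \<le> 8 * R * rho \<pi> L * (d_T x A)\<^sup>2"
proof -
  have nonneg: "0 \<le> L x y" if "y \<noteq> x" for y
    using generator that by (simp add: generator_def)
  have rate: "(\<Sum>y\<in>{y. y i \<noteq> x i}. L x y) \<le> R * rho \<pi> L" for i
    using R_stable assms(2) unfolding R_stable_def by blast
  have "(\<Sum>y\<in>UNIV. L x y * (max 0 ((d_T x A)\<^sup>2 - (d_T y A)\<^sup>2))\<^sup>2)
      \<le> 4 * real 2 * (R * rho \<pi> L) * (d_T x A)\<^sup>2"
    by (rule d_T_sq_gradient_le[of A x L 2, OF assms(1) nonneg
          flip_swap_card_diff_le_2[OF flip_swap] rate])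
  then show ?thesis by simp
qed

lemma Ent_exp_d_T_sq_le:
  assumes "A \<noteq> {}" "0 \<le> c"
    and step: "\<And>u v. v < u \<Longrightarrow> u - v \<le> 2 \<Longrightarrow>
      (exp (t * u) - exp (t * v)) * (t * u - t * v) \<le> c * exp (t * u) * (t * u - t * v)\<^sup>2"
  shows "Ent \<pi> (\<lambda>x. exp (t * (d_T x A)\<^sup>2))
    \<le> c * (8 * R) * t\<^sup>2 * expect \<pi> (\<lambda>x. (d_T x A)\<^sup>2 * exp (t * (d_T x A)\<^sup>2))"
proof (rule Ent_exp_le[where f = "\<lambda>x. (d_T x A)\<^sup>2" and \<kappa> = "8 * R",
      OF prob_nonneg prob_sum generator reversible rho_pos])
  show "(\<Sum>y\<in>UNIV. L x y * (max 0 ((d_T x A)\<^sup>2 - (d_T y A)\<^sup>2))\<^sup>2) \<le> 8 * R * rho \<pi> L * (d_T x A)\<^sup>2"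
    if "0 < \<pi> x" for x
    by (rule d_T_sq_gradient_le_rho[OF assms(1) that])
  show "(exp (t * (d_T x A)\<^sup>2) - exp (t * (d_T y A)\<^sup>2)) * (t * (d_T x A)\<^sup>2 - t * (d_T y A)\<^sup>2)
      \<le> c * exp (t * (d_T x A)\<^sup>2) * (t * (d_T x A)\<^sup>2 - t * (d_T y A)\<^sup>2)\<^sup>2"
    if "0 < \<pi> x" "0 < L x y" "(d_T y A)\<^sup>2 < (d_T x A)\<^sup>2" for x y
    by (rule step[OF that(3) d_T_sq_diff_le_2[of A L x y, OF assms(1) flip_swap that(2)]])
qed (rule assms(2))

lemma Ent_exp_d_T_sq_le_pos:
  assumes "A \<noteq> {}" "0 < t"
  shows "Ent \<pi> (\<lambda>x. exp (t * (d_T x A)\<^sup>2))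
    \<le> 8 * R * t\<^sup>2 * expect \<pi> (\<lambda>x. (d_T x A)\<^sup>2 * exp (t * (d_T x A)\<^sup>2))"
proof -
  have "Ent \<pi> (\<lambda>x. exp (t * (d_T x A)\<^sup>2))
      \<le> 1 * (8 * R) * t\<^sup>2 * expect \<pi> (\<lambda>x. (d_T x A)\<^sup>2 * exp (t * (d_T x A)\<^sup>2))"
  proof (rule Ent_exp_d_T_sq_le[OF assms(1) zero_le_one])
    fix u v :: real assume "v < u"
    then have "t * v \<le> t * u" using assms(2) by (intro mult_left_mono) auto
    then show "(exp (t * u) - exp (t * v)) * (t * u - t * v) \<le> 1 * exp (t * u) * (t * u - t * v)\<^sup>2"
      using exp_diff_mult_diff_le by simp
  qed
  then show ?thesis by simp
qed

text \<open>For \<open>-1/2 \<le> t < 0\<close> the exponent increases by at most \<open>1\<close> along a jump, since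
  \<open>d_T\<^sup>2\<close> drops by at most \<open>2\<close>.\<close>

lemma Ent_exp_d_T_sq_le_neg:
  assumes "A \<noteq> {}" "- (1 / 2) \<le> t" "t < 0"
  shows "Ent \<pi> (\<lambda>x. exp (t * (d_T x A)\<^sup>2))
    \<le> 16 * R * t\<^sup>2 * expect \<pi> (\<lambda>x. (d_T x A)\<^sup>2 * exp (t * (d_T x A)\<^sup>2))"
proof -
  have "Ent \<pi> (\<lambda>x. exp (t * (d_T x A)\<^sup>2))
      \<le> 2 * (8 * R) * t\<^sup>2 * expect \<pi> (\<lambda>x. (d_T x A)\<^sup>2 * exp (t * (d_T x A)\<^sup>2))"
  proof (rule Ent_exp_d_T_sq_le[OF assms(1)])
    fix u v :: real assume "v < u" "u - v \<le> 2"
    moreover have "- t * (u - v) \<le> 1 / 2 * 2"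
      using calculation assms(2,3) by (intro mult_mono) auto
    ultimately have "t * u \<le> t * v" "t * v \<le> t * u + 1"
      using assms(3) by (auto simp: algebra_simps)
    then show "(exp (t * u) - exp (t * v)) * (t * u - t * v) \<le> 2 * exp (t * u) * (t * u - t * v)\<^sup>2"
      by (rule exp_diff_mult_diff_le_2)
  qed simp
  then show ?thesis by simp
qed

text \<open>With \<open>a = 8 R\<close>, \<open>b = 16 R\<close>, \<open>s = -1/2\<close> and \<open>\<theta> = 1 / (40 R + 4)\<close> the side condition of
  \<open>herbst_product_le_one\<close> reads \<open>0 < 16 R + 2 \<le> 32 R + 4\<close>.\<close>

lemma expect_exp_d_T_sq_product_le_1:
  assumes "A \<noteq> {}"
  shows "expect \<pi> (\<lambda>x. exp (- (1 / 2) * (d_T x A)\<^sup>2))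
    * expect \<pi> (\<lambda>x. exp (1 / (40 * R + 4) * (d_T x A)\<^sup>2)) \<le> 1"
proof -
  define H where "H = (\<lambda>t. expect \<pi> (\<lambda>x. exp (t * (d_T x A)\<^sup>2)))"
  define dH where "dH = (\<lambda>t. expect \<pi> (\<lambda>x. (d_T x A)\<^sup>2 * exp (t * (d_T x A)\<^sup>2)))"
  have Ent_eq: "Ent \<pi> (\<lambda>x. exp (t * (d_T x A)\<^sup>2)) = t * dH t - H t * ln (H t)" for t
    unfolding H_def dH_def by (rule Ent_exp_eq)
  have "H (- (1 / 2)) * H (1 / (40 * R + 4)) \<le> 1"
  proof (rule herbst_product_le_one[of H dH _ _ "8 * R" "16 * R"])
    show "0 < H t" for t
      unfolding H_def by (rule expect_pos[OF prob_nonneg prob_sum]) simp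
    show "(H has_real_derivative dH t) (at t)" for t
      unfolding H_def dH_def by (rule has_real_derivative_expect_exp)
    show "H 0 = 1"
      using expect_const[OF prob_sum] by (simp add: H_def)
    show "0 \<le> dH 0"
      using prob_nonneg by (simp add: dH_def expect_def sum_nonneg)
    show "t * dH t - H t * ln (H t) \<le> 8 * R * t\<^sup>2 * dH t" if "0 < t" for t
      using Ent_exp_d_T_sq_le_pos[OF assms that] by (simp only: Ent_eq dH_def)
    show "t * dH t - H t * ln (H t) \<le> 16 * R * t\<^sup>2 * dH t" if "- (1 / 2) \<le> t" "t < 0" for t
      using Ent_exp_d_T_sq_le_neg[OF assms that] by (simp only: Ent_eq dH_def)
  qed (use R_nonneg in \<open>auto simp: field_simps\<close>)
  then show ?thesis by (simp add: H_def)
qed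

end

theorem proposition4p10:
  fixes \<pi> :: "('n::finite \<Rightarrow> bool) \<Rightarrow> real"
    and L :: "('n \<Rightarrow> bool) \<Rightarrow> ('n \<Rightarrow> bool) \<Rightarrow> real"
    and R :: real
    and A :: "('n \<Rightarrow> bool) set"
  assumes "\<forall>x. \<pi> x \<ge> 0" and "(\<Sum>x\<in>UNIV. \<pi> x) = 1"
    and "generator L" and "reversible \<pi> L" and "flip_swap L"
    and "R \<ge> 0" and "R_stable R \<pi> L"
    and "A \<noteq> {}"
  shows "(\<Sum>x\<in>A. \<pi> x) * expect \<pi> (\<lambda>x. exp ((d_T x A)\<^sup>2 / (40 * R + 4))) \<le> 1"
proof -
  interpret flip_swap_walk \<pi> L R
    using assms(1-7) by unfold_locales
  have "(\<Sum>x\<in>A. \<pi> x) = (\<Sum>x\<in>A. \<pi> x * exp (- (1 / 2) * (d_T x A)\<^sup>2))"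
    by (simp add: d_T_eq_0)
  also have "\<dots> \<le> expect \<pi> (\<lambda>x. exp (- (1 / 2) * (d_T x A)\<^sup>2))"
    unfolding expect_def using prob_nonneg by (intro sum_mono2) auto
  finally have "(\<Sum>x\<in>A. \<pi> x) * expect \<pi> (\<lambda>x. exp (1 / (40 * R + 4) * (d_T x A)\<^sup>2))
      \<le> expect \<pi> (\<lambda>x. exp (- (1 / 2) * (d_T x A)\<^sup>2))
        * expect \<pi> (\<lambda>x. exp (1 / (40 * R + 4) * (d_T x A)\<^sup>2))"
    using expect_pos[OF prob_nonneg prob_sum] by (intro mult_right_mono) (auto intro: less_imp_le)
  also have "\<dots> \<le> 1" by (rule expect_exp_d_T_sq_product_le_1[OF assms(8)])
  finally show ?thesis by (simp add: mult.commute)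
qed

end
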